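(* The following are equivalent: (1) $C(X)_\mathcal{P}$ is clean; (2) $C(X)_\mathcal{P}$ is weakly clean; (3) $C(X)_\mathcal{P}$ is semiclean.
   Context: Let $(X,\tau)$ be a $T_1$ topological space and $\mathcal{P}$ an ideal of closed subsets of $X$ (a nonempty family of closed sets closed under finite unions and under taking closed subsets). For $f\colon X\to\mathbb{R}$, $D_f$ denotes the set of points of discontinuity of $f$, and $C(X)_\mathcal{P}=\{f\colon X\to\mathbb{R} : \overline{D_f}\in\mathcal{P}\}$, a commutative ring with unity under pointwise operations. A ring $R$ is clean if every element is $u+e$ with $u$ a unit and $e$ idempotent; weakly clean if every element is $u+e$ or $u-e$ with $u$ a unit and $e$ idempotent; semiclean if every element is $u+a$ with $u$ a unit and $a$ periodic, i.e. $a^k=a^l$ for some positive integers $k\neq l$. *)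

theory Defs
  imports "HOL-Analysis.Analysis"
begin

definition disc_points :: "'a topology \<Rightarrow> ('a \<Rightarrow> real) \<Rightarrow> 'a set" where
  "disc_points X f = {x \<in> topspace X. \<not> (\<forall>e>0. \<exists>U. openin X U \<and> x \<in> U \<and>
       (\<forall>y\<in>U. \<bar>f y - f x\<bar> < e))}"

definition closed_ideal :: "'a topology \<Rightarrow> 'a set set \<Rightarrow> bool" where
  "closed_ideal X P \<longleftrightarrow> P \<noteq> {} \<and> (\<forall>A\<in>P. closedin X A) \<and>
     (\<forall>A\<in>P. \<forall>B\<in>P. A \<union> B \<in> P) \<and> (\<forall>A\<in>P. \<forall>B. closedin X B \<and> B \<subseteq> A \<longrightarrow> B \<in> P)"

text \<open>The ring C(X)_P, as a set of real functions; two functions are the same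
  ring element iff they agree on topspace X.\<close>
definition CP :: "'a topology \<Rightarrow> 'a set set \<Rightarrow> ('a \<Rightarrow> real) set" where
  "CP X P = {f. X closure_of (disc_points X f) \<in> P}"

definition fr_unit :: "'a set \<Rightarrow> ('a \<Rightarrow> real) set \<Rightarrow> ('a \<Rightarrow> real) \<Rightarrow> bool" where
  "fr_unit S R u \<longleftrightarrow> u \<in> R \<and> (\<exists>v\<in>R. \<forall>x\<in>S. u x * v x = 1)"

definition fr_idem :: "'a set \<Rightarrow> ('a \<Rightarrow> real) set \<Rightarrow> ('a \<Rightarrow> real) \<Rightarrow> bool" where
  "fr_idem S R e \<longleftrightarrow> e \<in> R \<and> (\<forall>x\<in>S. e x * e x = e x)"

definition fr_periodic :: "'a set \<Rightarrow> ('a \<Rightarrow> real) set \<Rightarrow> ('a \<Rightarrow> real) \<Rightarrow> bool" where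
  "fr_periodic S R a \<longleftrightarrow> a \<in> R \<and>
     (\<exists>k l::nat. 0 < k \<and> 0 < l \<and> k \<noteq> l \<and> (\<forall>x\<in>S. a x ^ k = a x ^ l))"

definition fr_clean :: "'a set \<Rightarrow> ('a \<Rightarrow> real) set \<Rightarrow> bool" where
  "fr_clean S R \<longleftrightarrow> (\<forall>f\<in>R. \<exists>u e. fr_unit S R u \<and> fr_idem S R e \<and>
       (\<forall>x\<in>S. f x = u x + e x))"

definition fr_weakly_clean :: "'a set \<Rightarrow> ('a \<Rightarrow> real) set \<Rightarrow> bool" where
  "fr_weakly_clean S R \<longleftrightarrow> (\<forall>f\<in>R. \<exists>u e. fr_unit S R u \<and> fr_idem S R e \<and>
       ((\<forall>x\<in>S. f x = u x + e x) \<or> (\<forall>x\<in>S. f x = u x - e x)))"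

definition fr_semiclean :: "'a set \<Rightarrow> ('a \<Rightarrow> real) set \<Rightarrow> bool" where
  "fr_semiclean S R \<longleftrightarrow> (\<forall>f\<in>R. \<exists>u a. fr_unit S R u \<and> fr_periodic S R a \<and>
       (\<forall>x\<in>S. f x = u x + a x))"

end

theory Submission
  imports Defs
begin

text \<open>Clean \<open>\<Rightarrow>\<close> weakly clean is immediate, and weakly clean \<open>\<Rightarrow>\<close> semiclean because
  \<open>e\<close> and \<open>-e\<close> are periodic for an idempotent \<open>e\<close>. For semiclean \<open>\<Rightarrow>\<close> clean, write
  \<open>4f - 2 = u + a\<close> with \<open>u\<close> a unit and \<open>a\<close> periodic. A periodic real has absolute value
  at most \<open>1\<close>, so \<open>f > 1/4\<close> where \<open>u > 0\<close> and \<open>f < 3/4\<close> where \<open>u < 0\<close>. Hence with \<open>e\<close> the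
  indicator of \<open>{u < 0}\<close>, which is continuous wherever \<open>u\<close> is, \<open>f - e\<close> never vanishes and
  is therefore a unit of \<open>C(X)\<^sub>P\<close>: its discontinuities are among those of \<open>f\<close> and \<open>u\<close>.\<close>

lemma tendsto_atin_self_iff:
  fixes f :: "'a \<Rightarrow> real"
  assumes "x \<in> topspace X"
  shows "(f \<longlongrightarrow> f x) (atin X x) \<longleftrightarrow>
           (\<forall>e>0. \<exists>U. openin X U \<and> x \<in> U \<and> (\<forall>y\<in>U. \<bar>f y - f x\<bar> < e))"
proof -
  have "(\<forall>y\<in>U - {x}. \<bar>f y - f x\<bar> < e) \<longleftrightarrow> (\<forall>y\<in>U. \<bar>f y - f x\<bar> < e)"
    if "e > 0" for U and e :: real
    using that by auto
  then show ?thesis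
    using assms by (simp add: tendsto_iff eventually_atin dist_real_def)
qed

lemma disc_points_iff:
  "x \<in> disc_points X f \<longleftrightarrow> x \<in> topspace X \<and> \<not> (f \<longlongrightarrow> f x) (atin X x)"
proof (cases "x \<in> topspace X")
  case True
  then show ?thesis
    unfolding disc_points_def using tendsto_atin_self_iff[OF True, of f] by simp
qed (simp add: disc_points_def)

lemma CP_if_disc_points_subset:
  assumes P: "closed_ideal X P" and f: "f \<in> CP X P" and g: "g \<in> CP X P"
    and sub: "disc_points X h \<subseteq> disc_points X f \<union> disc_points X g"
  shows "h \<in> CP X P"
proof -
  have "X closure_of disc_points X f \<in> P" "X closure_of disc_points X g \<in> P"
    using f g unfolding CP_def by simp_all
  then have union: "X closure_of disc_points X f \<union> X closure_of disc_points X g \<in> P"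
    using P unfolding closed_ideal_def by blast
  have "X closure_of disc_points X h
          \<subseteq> X closure_of disc_points X f \<union> X closure_of disc_points X g"
    using closure_of_mono[OF sub] by (simp add: closure_of_Un)
  with union P have "X closure_of disc_points X h \<in> P"
    unfolding closed_ideal_def by (meson closedin_closure_of)
  then show ?thesis
    unfolding CP_def by simp
qed

lemma CP_if_continuous_where_both:
  assumes "closed_ideal X P" "f \<in> CP X P" "g \<in> CP X P"
    and "\<And>x. \<lbrakk>x \<in> topspace X; (f \<longlongrightarrow> f x) (atin X x); (g \<longlongrightarrow> g x) (atin X x)\<rbrakk>
           \<Longrightarrow> (h \<longlongrightarrow> h x) (atin X x)"
  shows "h \<in> CP X P"
  using assms by (intro CP_if_disc_points_subset[OF assms(1-3)]) (auto simp: disc_points_iff)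

lemma CP_if_continuous_where:
  assumes "closed_ideal X P" "f \<in> CP X P"
    and "\<And>x. \<lbrakk>x \<in> topspace X; (f \<longlongrightarrow> f x) (atin X x)\<rbrakk> \<Longrightarrow> (h \<longlongrightarrow> h x) (atin X x)"
  shows "h \<in> CP X P"
  using CP_if_continuous_where_both[OF assms(1,2,2)] assms(3) by blast

lemma CP_minus:
  assumes "closed_ideal X P" "f \<in> CP X P"
  shows "(\<lambda>x. - f x) \<in> CP X P"
  using assms by (rule CP_if_continuous_where) (rule tendsto_minus)

lemma CP_fr_unit_iff:
  assumes "closed_ideal X P"
  shows "fr_unit (topspace X) (CP X P) u \<longleftrightarrow> u \<in> CP X P \<and> (\<forall>x\<in>topspace X. u x \<noteq> 0)"
proof
  assume "fr_unit (topspace X) (CP X P) u"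
  then obtain v where "u \<in> CP X P" and inv: "\<forall>x\<in>topspace X. u x * v x = 1"
    unfolding fr_unit_def by blast
  moreover have "u x \<noteq> 0" if "x \<in> topspace X" for x
  proof
    assume "u x = 0"
    moreover have "u x * v x = 1"
      using inv that by blast
    ultimately show False
      by simp
  qed
  ultimately show "u \<in> CP X P \<and> (\<forall>x\<in>topspace X. u x \<noteq> 0)"
    by blast
next
  assume u: "u \<in> CP X P \<and> (\<forall>x\<in>topspace X. u x \<noteq> 0)"
  have "(\<lambda>x. inverse (u x)) \<in> CP X P"
  proof (rule CP_if_continuous_where[OF assms])
    show "u \<in> CP X P"
      using u by blast
    fix x
    assume "x \<in> topspace X" and "(u \<longlongrightarrow> u x) (atin X x)"
    with u show "((\<lambda>x. inverse (u x)) \<longlongrightarrow> inverse (u x)) (atin X x)"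
      by (intro tendsto_inverse) auto
  qed
  moreover have "\<forall>x\<in>topspace X. u x * inverse (u x) = 1"
    using u by simp
  ultimately show "fr_unit (topspace X) (CP X P) u"
    using u unfolding fr_unit_def by (intro conjI bexI[of _ "\<lambda>x. inverse (u x)"]) blast+
qed

lemma CP_negative_indicator:
  assumes P: "closed_ideal X P" and u: "u \<in> CP X P" and nz: "\<forall>x\<in>topspace X. u x \<noteq> 0"
  shows "(\<lambda>x. if u x < 0 then 1 else 0 :: real) \<in> CP X P"
proof (rule CP_if_continuous_where[OF P u])
  fix x
  assume "x \<in> topspace X" and lim: "(u \<longlongrightarrow> u x) (atin X x)"
  have "eventually (\<lambda>y. (u y < 0) = (u x < 0)) (atin X x)"
  proof (cases "u x < 0")
    case True
    have "eventually (\<lambda>y. u y < 0) (atin X x)"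
      using lim True by (rule order_tendstoD(2))
    then show ?thesis
      by (rule eventually_mono) (simp add: True)
  next
    case False
    moreover have "u x \<noteq> 0"
      using nz \<open>x \<in> topspace X\<close> by blast
    ultimately have "u x > 0"
      by linarith
    have "eventually (\<lambda>y. 0 < u y) (atin X x)"
      using lim \<open>u x > 0\<close> by (rule order_tendstoD(1))
    then show ?thesis
      by (rule eventually_mono) (simp add: False)
  qed
  then have "eventually (\<lambda>y. (if u y < 0 then 1 else 0 :: real) = (if u x < 0 then 1 else 0)) (atin X x)"
    by (rule eventually_mono) simp
  then show "((\<lambda>x. if u x < 0 then 1 else 0 :: real) \<longlongrightarrow> (if u x < 0 then 1 else 0)) (atin X x)"
    by (rule tendsto_eventually)
qed

lemma fr_clean_imp_weakly_clean: "fr_clean S R \<Longrightarrow> fr_weakly_clean S R"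
  unfolding fr_clean_def fr_weakly_clean_def by blast

lemma fr_idem_imp_periodic:
  assumes "fr_idem S R e"
  shows "fr_periodic S R e"
proof -
  have "\<forall>x\<in>S. e x ^ 1 = e x ^ 2"
    using assms unfolding fr_idem_def by (simp add: power2_eq_square)
  with assms show ?thesis
    unfolding fr_periodic_def fr_idem_def by (intro conjI exI[of _ 1] exI[of _ 2]) auto
qed

lemma fr_idem_imp_periodic_minus:
  assumes "fr_idem S R e" and "(\<lambda>x. - e x) \<in> R"
  shows "fr_periodic S R (\<lambda>x. - e x)"
proof -
  have "(- e x) ^ 2 = (- e x) ^ 4" if "x \<in> S" for x
  proof -
    have idem: "e x * e x = e x"
      using assms(1) that unfolding fr_idem_def by blast
    then have sq: "(- e x) ^ 2 = e x"
      by (simp only: power2_eq_square minus_mult_minus)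
    have "(- e x) ^ 4 = ((- e x) ^ 2) ^ 2"
      by (simp flip: power_mult)
    also have "\<dots> = e x"
      by (subst sq) (simp only: power2_eq_square idem)
    finally show ?thesis
      using sq by simp
  qed
  with assms(2) show ?thesis
    unfolding fr_periodic_def by (intro conjI exI[of _ 2] exI[of _ 4]) auto
qed

lemma fr_weakly_clean_imp_semiclean:
  assumes minus_closed: "\<And>f. f \<in> R \<Longrightarrow> (\<lambda>x. - f x) \<in> R" and "fr_weakly_clean S R"
  shows "fr_semiclean S R"
  unfolding fr_semiclean_def
proof
  fix f
  assume "f \<in> R"
  with assms(2) obtain u e where u: "fr_unit S R u" and e: "fr_idem S R e"
    and "(\<forall>x\<in>S. f x = u x + e x) \<or> (\<forall>x\<in>S. f x = u x + - e x)"
    unfolding fr_weakly_clean_def by auto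
  moreover have "(\<lambda>x. - e x) \<in> R"
    using e minus_closed unfolding fr_idem_def by blast
  then have "fr_periodic S R e" "fr_periodic S R (\<lambda>x. - e x)"
    using e fr_idem_imp_periodic fr_idem_imp_periodic_minus by blast+
  ultimately show "\<exists>u a. fr_unit S R u \<and> fr_periodic S R a \<and> (\<forall>x\<in>S. f x = u x + a x)"
    by blast
qed

lemma abs_le_one_if_power_eq_power:
  fixes a :: real
  assumes "k \<noteq> l" "a ^ k = a ^ l"
  shows "\<bar>a\<bar> \<le> 1"
proof (rule ccontr)
  assume "\<not> \<bar>a\<bar> \<le> 1"
  then have "strict_mono (\<lambda>n. \<bar>a\<bar> ^ n)"
    by (intro strict_monoI power_strict_increasing) auto
  then have "\<bar>a\<bar> ^ k \<noteq> \<bar>a\<bar> ^ l"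
    using assms(1) strict_mono_eq by metis
  with assms(2) show False
    by (metis power_abs)
qed

lemma sub_negative_indicator_nonzero:
  fixes f u a :: real
  assumes "4 * f - 2 = u + a" "\<bar>a\<bar> \<le> 1" "u \<noteq> 0"
  shows "f - (if u < 0 then 1 else 0) \<noteq> 0"
  using assms by (auto simp: abs_le_iff)

lemma CP_semiclean_imp_clean:
  assumes P: "closed_ideal X P" and semiclean: "fr_semiclean (topspace X) (CP X P)"
  shows "fr_clean (topspace X) (CP X P)"
  unfolding fr_clean_def
proof
  let ?S = "topspace X" and ?R = "CP X P"
  fix f
  assume f: "f \<in> ?R"
  have "(\<lambda>x. 4 * f x - 2) \<in> ?R"
    by (intro CP_if_continuous_where[OF P f]) (auto intro!: tendsto_intros)
  then have "\<exists>u a. fr_unit ?S ?R u \<and> fr_periodic ?S ?R a \<and> (\<forall>x\<in>?S. 4 * f x - 2 = u x + a x)"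
    using semiclean unfolding fr_semiclean_def by (rule bspec[rotated])
  then obtain u a where "fr_unit ?S ?R u" and a: "fr_periodic ?S ?R a"
    and decomp: "\<forall>x\<in>?S. 4 * f x - 2 = u x + a x"
    by blast
  then have u: "u \<in> ?R" "\<forall>x\<in>?S. u x \<noteq> 0"
    unfolding CP_fr_unit_iff[OF P] by blast+
  obtain k l :: nat where "k \<noteq> l" "\<forall>x\<in>?S. a x ^ k = a x ^ l"
    using a unfolding fr_periodic_def by blast
  then have a_bound: "\<forall>x\<in>?S. \<bar>a x\<bar> \<le> 1"
    using abs_le_one_if_power_eq_power by blast
  define e where "e = (\<lambda>x. if u x < 0 then 1 else 0 :: real)"
  have eR: "e \<in> ?R"
    unfolding e_def using CP_negative_indicator[OF P u] .
  have "(\<lambda>x. f x - e x) \<in> ?R"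
    by (intro CP_if_continuous_where_both[OF P f eR]) (auto intro!: tendsto_intros)
  moreover have "\<forall>x\<in>?S. f x - e x \<noteq> 0"
    using decomp a_bound u(2) sub_negative_indicator_nonzero unfolding e_def by blast
  ultimately have "fr_unit ?S ?R (\<lambda>x. f x - e x)"
    unfolding CP_fr_unit_iff[OF P] by blast
  moreover have "fr_idem ?S ?R e"
    using eR unfolding fr_idem_def e_def by simp
  moreover have "\<forall>x\<in>?S. f x = (f x - e x) + e x"
    by simp
  ultimately show "\<exists>u e. fr_unit ?S ?R u \<and> fr_idem ?S ?R e \<and> (\<forall>x\<in>?S. f x = u x + e x)"
    by blast
qed

theorem theorem3p10:
  fixes X :: "'a topology" and P :: "'a set set"
  assumes "t1_space X" and "closed_ideal X P"
  shows "(fr_clean (topspace X) (CP X P) \<longleftrightarrow> fr_weakly_clean (topspace X) (CP X P)) \<and>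
         (fr_weakly_clean (topspace X) (CP X P) \<longleftrightarrow> fr_semiclean (topspace X) (CP X P))"
proof -
  have "fr_weakly_clean (topspace X) (CP X P) \<Longrightarrow> fr_semiclean (topspace X) (CP X P)"
    using CP_minus[OF assms(2)] by (rule fr_weakly_clean_imp_semiclean)
  then show ?thesis
    using fr_clean_imp_weakly_clean CP_semiclean_imp_clean[OF assms(2)] by blast
qed

end
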